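(* Let $\mathfrak A$ be an abelian (possibly non-unital) $C^*$-algebra with Gel'fand spectrum $X=\sigma(\mathfrak A)$, let $\Phi$ be a unital $*$-endomorphism of $\mathfrak A\cong C_0(X)$, and let $\tau:X\to X$ be the continuous proper map with $\Phi(f)=f\circ\tau$ for all $f\in C_0(X)$. Then either $\sigma(\Phi)=\mathbb D$, or $\{\lambda\in\mathbb C:0<|\lambda|<1\}\subset\mathbb C\setminus\sigma(\Phi)$. Moreover: (i) if $\tau(X)\neq X$, then $0\in\sigma(\Phi)$; (ii) if $\tau^{n+1}(X)\neq\tau^n(X)$ for every $n\in\mathbb N$, then $\sigma(\Phi)=\mathbb D$; (iii) if there exists $n_0\in\mathbb N$ with $\tau^{n_0+1}(X)=\tau^{n_0}(X)$, then either $\sigma(\Phi)=\mathbb D$ or $\sigma(\Phi)\subset\mathbb T\cup\{0\}$.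
   Context: $\mathbb D$ is the closed unit disk and $\mathbb T$ the unit circle in $\mathbb C$; $\tau^0$ is the identity. A $*$-endomorphism $\Phi$ of a (possibly non-unital) $C^*$-algebra $\mathfrak A$ is called unital if $\big(\Phi(u_\iota)\big)_{\iota\in I}$ is an approximate unity for $\mathfrak A$ for some (equivalently, every) approximate unity $(u_\iota)_{\iota\in I}$ of $\mathfrak A$; an approximate unity is a net with $u_\iota a\to a$ and $au_\iota\to a$ in norm for all $a$. For such $\Phi$ on $C_0(X)$ there is a unique continuous proper $\tau$ with $\Phi(f)=f\circ\tau$. $\sigma(\Phi)$ is the spectrum of $\Phi$ as a bounded operator on $\mathfrak A$. *)

theory Defs
  imports "HOL-Analysis.Analysis"
begin

text \<open>Functions are normalised to be 0 outside the topspace,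
  so that elements are determined by their values on X.\<close>
definition C0 :: "'a topology \<Rightarrow> ('a \<Rightarrow> complex) set" where
  "C0 X = {f. continuous_map X euclidean f
              \<and> (\<forall>e>0. compactin X {x \<in> topspace X. e \<le> cmod (f x)})
              \<and> (\<forall>x. x \<notin> topspace X \<longrightarrow> f x = 0)}"

definition sup_norm :: "'a topology \<Rightarrow> ('a \<Rightarrow> complex) \<Rightarrow> real" where
  "sup_norm X f = Sup (insert 0 ((\<lambda>x. cmod (f x)) ` topspace X))"

definition bounded_op :: "'a topology \<Rightarrow> (('a \<Rightarrow> complex) \<Rightarrow> ('a \<Rightarrow> complex)) \<Rightarrow> bool" where
  "bounded_op X T \<longleftrightarrow>
     (\<forall>f\<in>C0 X. T f \<in> C0 X)
   \<and> (\<forall>f\<in>C0 X. \<forall>g\<in>C0 X. T (\<lambda>x. f x + g x) = (\<lambda>x. T f x + T g x))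
   \<and> (\<forall>f\<in>C0 X. \<forall>c::complex. T (\<lambda>x. c * f x) = (\<lambda>x. c * T f x))
   \<and> (\<exists>K. \<forall>f\<in>C0 X. sup_norm X (T f) \<le> K * sup_norm X f)"

definition op_spectrum :: "'a topology \<Rightarrow> (('a \<Rightarrow> complex) \<Rightarrow> ('a \<Rightarrow> complex)) \<Rightarrow> complex set" where
  "op_spectrum X T = {z. \<not> (\<exists>S. bounded_op X S
        \<and> (\<forall>f\<in>C0 X. S (\<lambda>x. T f x - z * f x) = f)
        \<and> (\<forall>f\<in>C0 X. (\<lambda>x. T (S f) x - z * S f x) = f))}"

definition comp_op :: "'a topology \<Rightarrow> ('a \<Rightarrow> 'a) \<Rightarrow> ('a \<Rightarrow> complex) \<Rightarrow> ('a \<Rightarrow> complex)" where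
  "comp_op X \<tau> f = (\<lambda>x. if x \<in> topspace X then f (\<tau> x) else 0)"

end

theory Submission
  imports Defs
begin

text \<open>
  For \<open>|\<lambda>| > 1\<close> the Neumann series \<open>-\<Sum>k. \<lambda>^-(k+1) \<Phi>^k\<close>
  inverts \<open>\<Phi> - \<lambda>\<close>, so the spectrum lies in the closed unit disc.

  If \<open>\<tau>^n z\<close> is not in \<open>\<tau>^(n+1)(X)\<close>, the points \<open>z, \<tau> z, \<dots>, \<tau>^n z\<close> are distinct and
  outside the closed set \<open>\<tau>^(n+1)(X)\<close>; interpolating arbitrary values of modulus at most 1
  along this orbit shows that a left inverse of \<open>\<Phi> - \<lambda>\<close> of norm \<open>K\<close> forces
  \<open>|\<Sum>k\<le>n. \<lambda>^k u k| \<le> K |\<lambda>|^(n+1)\<close> for all such \<open>u\<close>. Holding for every \<open>n\<close>, this forces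
  \<open>|\<lambda>| > 1\<close>; this gives (ii), and (i) is the case \<open>n = 0\<close>, \<open>\<lambda> = 0\<close>.

  If the images stabilise at \<open>Y = \<tau>^n(X)\<close>, then \<open>\<tau>(Y) = Y\<close>. If \<open>\<tau>\<close> is injective on \<open>Y\<close> it
  is a homeomorphism of the closed set \<open>Y\<close>, and for \<open>0 < |\<lambda>| < 1\<close> a finite Neumann sum along
  \<open>\<tau>\<close> followed by a geometric series along \<open>\<tau>\<inverse>\<close> on \<open>Y\<close> inverts \<open>\<Phi> - \<lambda>\<close>. Otherwise two
  points of \<open>Y\<close> have the same image; disjoint backward orbits through them give the same
  estimate for a right inverse, and the whole disc is spectrum.
\<close>

section \<open>Functions vanishing at infinity\<close>

lemma C0_D:
  assumes "f \<in> C0 X"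
  shows "continuous_map X euclidean f"
    and "\<And>e. e > 0 \<Longrightarrow> compactin X {x \<in> topspace X. e \<le> cmod (f x)}"
    and "\<And>x. x \<notin> topspace X \<Longrightarrow> f x = 0"
  using assms by (auto simp: C0_def)

lemma C0_I:
  assumes "continuous_map X euclidean f"
    and "\<And>e. e > 0 \<Longrightarrow> compactin X {x \<in> topspace X. e \<le> cmod (f x)}"
    and "\<And>x. x \<notin> topspace X \<Longrightarrow> f x = 0"
  shows "f \<in> C0 X"
  using assms by (auto simp: C0_def)

lemma closedin_norm_ge:
  assumes "continuous_map X euclidean f"
  shows "closedin X {x \<in> topspace X. e \<le> cmod (f x)}"
  using closedin_continuous_map_preimage[OF continuous_map_norm[OF assms], of "{e..}"] by auto

lemma C0_compactin_superset:
  assumes "continuous_map X euclidean f" "compactin X K"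
    and "{x \<in> topspace X. e \<le> cmod (f x)} \<subseteq> K"
  shows "compactin X {x \<in> topspace X. e \<le> cmod (f x)}"
  using closed_compactin[OF assms(2,3) closedin_norm_ge[OF assms(1)]] .

lemma C0_bounded:
  assumes "f \<in> C0 X"
  obtains B where "\<And>x. cmod (f x) \<le> B"
proof -
  let ?K = "{x \<in> topspace X. 1 \<le> cmod (f x)}"
  have "compactin euclideanreal ((\<lambda>x. cmod (f x)) ` ?K)"
    using C0_D(2)[OF assms, of 1] continuous_map_norm[OF C0_D(1)[OF assms]]
    by (rule image_compactin) simp
  then have "bounded ((\<lambda>x. cmod (f x)) ` ?K)"
    by (intro compact_imp_bounded) (simp add: compactin_euclidean_iff)
  then obtain B where B: "\<And>x. x \<in> ?K \<Longrightarrow> cmod (f x) \<le> B"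
    by (auto simp: bounded_iff)
  have "cmod (f x) \<le> max 1 B" for x
    using B[of x] C0_D(3)[OF assms, of x] by (cases "x \<in> topspace X") fastforce+
  then show thesis by (rule that)
qed

lemma norm_le_sup_norm:
  assumes "f \<in> C0 X"
  shows "cmod (f x) \<le> sup_norm X f"
proof -
  obtain B where "\<And>x. cmod (f x) \<le> B" using C0_bounded[OF assms] by blast
  then have bdd: "bdd_above (insert 0 ((\<lambda>x. cmod (f x)) ` topspace X))"
    by (auto intro!: bdd_aboveI[of _ "max 0 B"] simp: le_max_iff_disj)
  show ?thesis
    unfolding sup_norm_def using C0_D(3)[OF assms, of x]
    by (cases "x \<in> topspace X") (auto intro!: cSup_upper[OF _ bdd])
qed

lemma sup_norm_nonneg: "f \<in> C0 X \<Longrightarrow> 0 \<le> sup_norm X f"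
  using norm_le_sup_norm norm_ge_zero order_trans by metis

lemma sup_norm_le:
  assumes "\<And>x. x \<in> topspace X \<Longrightarrow> cmod (f x) \<le> M" "0 \<le> M"
  shows "sup_norm X f \<le> M"
  unfolding sup_norm_def using assms by (intro cSup_least) auto

lemma C0_zero: "(\<lambda>x. 0) \<in> C0 X"
  by (intro C0_I) auto

lemma C0_add:
  assumes f: "f \<in> C0 X" and g: "g \<in> C0 X"
  shows "(\<lambda>x. f x + g x) \<in> C0 X"
proof (intro C0_I)
  show c: "continuous_map X euclidean (\<lambda>x. f x + g x)"
    by (rule continuous_map_add[OF C0_D(1)[OF f] C0_D(1)[OF g]])
  fix e :: real assume e: "e > 0"
  have "{x \<in> topspace X. e \<le> cmod (f x + g x)} \<subseteq>
        {x \<in> topspace X. e/2 \<le> cmod (f x)} \<union> {x \<in> topspace X. e/2 \<le> cmod (g x)}"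
  proof (rule subsetI)
    fix x assume "x \<in> {x \<in> topspace X. e \<le> cmod (f x + g x)}"
    then show "x \<in> {x \<in> topspace X. e/2 \<le> cmod (f x)} \<union> {x \<in> topspace X. e/2 \<le> cmod (g x)}"
      using norm_triangle_ineq[of "f x" "g x"] by auto
  qed
  moreover have "compactin X ({x \<in> topspace X. e/2 \<le> cmod (f x)} \<union> {x \<in> topspace X. e/2 \<le> cmod (g x)})"
    using C0_D(2)[OF f, of "e/2"] C0_D(2)[OF g, of "e/2"] e by (intro compactin_Un) auto
  ultimately show "compactin X {x \<in> topspace X. e \<le> cmod (f x + g x)}"
    by (rule C0_compactin_superset[OF c, rotated])
qed (simp add: C0_D(3)[OF f] C0_D(3)[OF g])

lemma C0_cmult:
  assumes f: "f \<in> C0 X"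
  shows "(\<lambda>x. c * f x) \<in> C0 X"
proof (cases "c = 0")
  case True then show ?thesis using C0_zero by simp
next
  case False
  show ?thesis
  proof (intro C0_I)
    show "continuous_map X euclidean (\<lambda>x. c * f x)"
      using C0_D(1)[OF f] by (simp add: continuous_map_atin tendsto_mult_left)
    fix e :: real assume e: "e > 0"
    have "{x \<in> topspace X. e \<le> cmod (c * f x)} = {x \<in> topspace X. e / cmod c \<le> cmod (f x)}"
      using False by (auto simp: norm_mult field_simps)
    then show "compactin X {x \<in> topspace X. e \<le> cmod (c * f x)}"
      using C0_D(2)[OF f, of "e / cmod c"] e False by simp
  qed (simp add: C0_D(3)[OF f])
qed

lemma C0_sum:
  assumes "\<And>i. i \<in> I \<Longrightarrow> F i \<in> C0 X"
  shows "(\<lambda>x. \<Sum>i\<in>I. F i x) \<in> C0 X"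
  using assms
proof (induction I rule: infinite_finite_induct)
  case (insert a I)
  then show ?case using C0_add[of "F a" X "\<lambda>x. \<Sum>i\<in>I. F i x"] by simp
qed (simp_all add: C0_zero)

lemma C0_comp_op:
  assumes "continuous_map X X \<phi>" "proper_map X X \<phi>" "g \<in> C0 X"
  shows "comp_op X \<phi> g \<in> C0 X"
proof (intro C0_I)
  have "continuous_map X euclidean (g \<circ> \<phi>)"
    using assms C0_D(1) continuous_map_compose by blast
  then show "continuous_map X euclidean (comp_op X \<phi> g)"
    by (rule continuous_map_eq) (simp add: comp_op_def)
  fix e :: real assume e: "e > 0"
  have "{x \<in> topspace X. e \<le> cmod (comp_op X \<phi> g x)}
        = {x \<in> topspace X. \<phi> x \<in> {y \<in> topspace X. e \<le> cmod (g y)}}"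
    using assms(1) by (auto simp: comp_op_def continuous_map_def)
  moreover have "compactin X {x \<in> topspace X. \<phi> x \<in> {y \<in> topspace X. e \<le> cmod (g y)}}"
    using assms(2) C0_D(2)[OF assms(3) e] unfolding proper_map_alt by blast
  ultimately show "compactin X {x \<in> topspace X. e \<le> cmod (comp_op X \<phi> g x)}"
    by simp
qed (simp add: comp_op_def)

lemma C0_uniform_limit:
  fixes F :: "nat \<Rightarrow> 'a \<Rightarrow> complex"
  assumes F: "\<And>n. F n \<in> C0 X" and out: "\<And>x. x \<notin> topspace X \<Longrightarrow> f x = 0"
    and conv: "\<And>e. e > 0 \<Longrightarrow> \<forall>\<^sub>F n in sequentially. \<forall>x \<in> topspace X. cmod (F n x - f x) < e"
  shows "f \<in> C0 X"
proof (intro C0_I)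
  show c: "continuous_map X euclidean f"
    unfolding mtopology_is_euclidean[symmetric]
  proof (rule Met_TC.continuous_map_uniform_limit[where F=sequentially and f=F])
    show "\<forall>\<^sub>F n in sequentially. continuous_map X Met_TC.mtopology (F n)"
      using C0_D(1)[OF F] by simp
    fix e :: real assume "0 < e"
    then show "\<forall>\<^sub>F n in sequentially. \<forall>x\<in>topspace X. f x \<in> UNIV \<and> dist (F n x) (f x) < e"
      using conv[of e] by (simp add: dist_norm)
  qed simp
  fix e :: real assume e: "e > 0"
  obtain n where n: "\<forall>x \<in> topspace X. cmod (F n x - f x) < e/2"
    using eventually_happens'[OF _ conv[of "e/2"]] e by auto
  have "{x \<in> topspace X. e \<le> cmod (f x)} \<subseteq> {x \<in> topspace X. e/2 \<le> cmod (F n x)}"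
  proof (rule subsetI)
    fix x assume "x \<in> {x \<in> topspace X. e \<le> cmod (f x)}"
    then show "x \<in> {x \<in> topspace X. e/2 \<le> cmod (F n x)}"
      using n norm_triangle_ineq2[of "f x" "F n x"] by (auto simp: norm_minus_commute)
  qed
  then show "compactin X {x \<in> topspace X. e \<le> cmod (f x)}"
    using C0_compactin_superset[OF c] C0_D(2)[OF F[of n], of "e/2"] e by simp
qed (rule out)

lemma C0_compose_contraction:
  assumes f: "f \<in> C0 X" and \<phi>: "continuous_on UNIV \<phi>" "\<And>w. cmod (\<phi> w) \<le> cmod w"
  shows "(\<lambda>x. \<phi> (f x)) \<in> C0 X"
proof (intro C0_I)
  show c: "continuous_map X euclidean (\<lambda>x. \<phi> (f x))"
    using continuous_map_compose[OF C0_D(1)[OF f], of euclidean \<phi>] \<phi>(1) by (simp add: o_def)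
  fix e :: real assume "e > 0"
  have "{x \<in> topspace X. e \<le> cmod (\<phi> (f x))} \<subseteq> {x \<in> topspace X. e \<le> cmod (f x)}"
    using \<phi>(2) order_trans by blast
  then show "compactin X {x \<in> topspace X. e \<le> cmod (\<phi> (f x))}"
    using C0_compactin_superset[OF c] C0_D(2)[OF f \<open>e > 0\<close>] by blast
next
  fix x assume "x \<notin> topspace X"
  then show "\<phi> (f x) = 0" using \<phi>(2)[of 0] C0_D(3)[OF f] by simp
qed

lemma exists_C0_bump:
  assumes "Hausdorff_space X" "locally_compact_space X"
    and "closedin X C" "x \<in> topspace X" "x \<notin> C"
  obtains h where "h \<in> C0 X" "h x = 1" "\<And>y. y \<in> C \<Longrightarrow> h y = 0"
proof -
  have "regular_space X"
    using assms(1,2) locally_compact_Hausdorff_imp_regular_space by blast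
  then have "neighbourhood_base_of (\<lambda>C. compactin X C \<and> closedin X C) X"
    using assms(2) locally_compact_regular_space_neighbourhood_base by blast
  then obtain U M where UM: "openin X U" "compactin X M" "x \<in> U" "U \<subseteq> M" "M \<subseteq> topspace X - C"
    unfolding neighbourhood_base_of using assms(3-5)
    by (metis (no_types, lifting) Diff_iff closedin_def)
  have "completely_regular_space X"
    using assms(1,2) \<open>regular_space X\<close> locally_compact_regular_imp_completely_regular_space by blast
  then obtain f :: "'a \<Rightarrow> real"
    where f: "continuous_map X (top_of_set {0..1}) f" "f x = 0" "f ` (topspace X - U) \<subseteq> {1}"
    using assms(4) UM(1,3) unfolding completely_regular_space_def by blast
  define h where "h = (\<lambda>y. if y \<in> topspace X then complex_of_real (1 - f y) else 0)"
  have hc: "continuous_map X euclidean h"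
  proof -
    have "continuous_map X euclideanreal f"
      using f(1) continuous_map_into_fulltopology by blast
    then have "continuous_map X euclidean (\<lambda>y. complex_of_real (1 - f y))"
      by (simp add: continuous_map_atin tendsto_of_real tendsto_diff)
    then show ?thesis by (rule continuous_map_eq) (simp add: h_def)
  qed
  have hout: "h y = 0" if "y \<notin> U" for y
    using f(3) that by (auto simp: h_def)
  show thesis
  proof (rule that)
    show "h \<in> C0 X"
    proof (intro C0_I hc)
      fix e :: real assume "e > 0"
      then have "{y \<in> topspace X. e \<le> cmod (h y)} \<subseteq> U"
        using hout by (metis (mono_tags, lifting) mem_Collect_eq norm_zero not_le subsetI)
      then have "{y \<in> topspace X. e \<le> cmod (h y)} \<subseteq> M"
        using \<open>U \<subseteq> M\<close> by blast
      then show "compactin X {y \<in> topspace X. e \<le> cmod (h y)}"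
        using C0_compactin_superset[OF hc \<open>compactin X M\<close>] by blast
    qed (simp add: h_def)
    show "h x = 1" using assms(4) f(2) by (simp add: h_def)
    show "h y = 0" if "y \<in> C" for y using hout UM(4,5) that by blast
  qed
qed

lemma C0_interpolation_unbounded:
  assumes H: "Hausdorff_space X" and L: "locally_compact_space X" and C: "closedin X C"
    and I: "finite I" "inj_on z I" "z ` I \<subseteq> topspace X - C"
  obtains G where "G \<in> C0 X" "\<And>i. i \<in> I \<Longrightarrow> G (z i) = u i" "\<And>y. y \<in> C \<Longrightarrow> G y = 0"
proof -
  have "\<forall>i\<in>I. \<exists>b. b \<in> C0 X \<and> b (z i) = 1 \<and> (\<forall>y\<in>C \<union> z ` (I - {i}). b y = 0)"
  proof
    fix i assume i: "i \<in> I"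
    have "finite (z ` (I - {i}))" "z ` (I - {i}) \<subseteq> topspace X" using I by auto
    then have "closedin X (z ` (I - {i}))"
      using Hausdorff_imp_t1_space[OF H] unfolding t1_space_closedin_finite by blast
    then have "closedin X (C \<union> z ` (I - {i}))" by (rule closedin_Un[OF C])
    moreover have "z i \<notin> C \<union> z ` (I - {i})"
      using I(2,3) i by (auto simp: inj_on_image_mem_iff[OF I(2)])
    moreover have "z i \<in> topspace X" using I(3) i by blast
    ultimately obtain b where "b \<in> C0 X" "b (z i) = 1" "\<And>y. y \<in> C \<union> z ` (I - {i}) \<Longrightarrow> b y = 0"
      using exists_C0_bump[OF H L] by metis
    then show "\<exists>b. b \<in> C0 X \<and> b (z i) = 1 \<and> (\<forall>y\<in>C \<union> z ` (I - {i}). b y = 0)"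
      by blast
  qed
  from bchoice[OF this] obtain b
    where b: "\<And>i. i \<in> I \<Longrightarrow> b i \<in> C0 X \<and> b i (z i) = 1 \<and> (\<forall>y\<in>C \<union> z ` (I - {i}). b i y = 0)"
    by blast
  define G where "G = (\<lambda>y. \<Sum>i\<in>I. u i * b i y)"
  show thesis
  proof (rule that)
    show "G \<in> C0 X" unfolding G_def using b by (intro C0_sum C0_cmult) auto
    show "G (z j) = u j" if "j \<in> I" for j
    proof -
      have "u i * b i (z j) = (if i = j then u j else 0)" if "i \<in> I" for i
        using b[OF that] b[OF \<open>j \<in> I\<close>] \<open>j \<in> I\<close> by auto
      then have "G (z j) = (\<Sum>i\<in>I. if i = j then u j else 0)"
        unfolding G_def by (intro sum.cong) auto
      then show ?thesis using that I(1) by simp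
    qed
    show "G y = 0" if "y \<in> C" for y unfolding G_def using b that by simp
  qed
qed

lemma radial_retraction_unit_disc:
  defines "r \<equiv> \<lambda>w::complex. w / complex_of_real (max 1 (cmod w))"
  shows "continuous_on UNIV r" and "cmod (r w) \<le> 1" and "cmod (r w) \<le> cmod w"
    and "cmod w \<le> 1 \<Longrightarrow> r w = w"
proof -
  have "continuous_on UNIV (\<lambda>w::complex. complex_of_real (max 1 (cmod w)))"
    by (intro continuous_intros)
  then show "continuous_on UNIV r"
    unfolding r_def by (intro continuous_on_divide continuous_on_id) auto
  have "cmod (r w) = cmod w / max 1 (cmod w)"
    unfolding r_def by (simp add: norm_divide)
  moreover have "cmod w / max 1 (cmod w) \<le> 1"
    by (subst divide_le_eq_1_pos) auto
  moreover have "cmod w / max 1 (cmod w) \<le> cmod w"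
    by (simp add: divide_le_eq mult_le_cancel_left1 le_max_iff_disj)
  ultimately show "cmod (r w) \<le> 1" "cmod (r w) \<le> cmod w" by simp_all
  show "cmod w \<le> 1 \<Longrightarrow> r w = w" by (simp add: r_def max_def)
qed

lemma C0_interpolation:
  assumes "Hausdorff_space X" "locally_compact_space X" "closedin X C"
    and "finite I" "inj_on z I" "z ` I \<subseteq> topspace X - C"
    and u: "\<And>i. i \<in> I \<Longrightarrow> cmod (u i) \<le> 1"
  obtains h where "h \<in> C0 X" "\<And>y. cmod (h y) \<le> 1" "\<And>i. i \<in> I \<Longrightarrow> h (z i) = u i"
    "\<And>y. y \<in> C \<Longrightarrow> h y = 0"
proof -
  obtain G where G: "G \<in> C0 X" "\<And>i. i \<in> I \<Longrightarrow> G (z i) = u i" "\<And>y. y \<in> C \<Longrightarrow> G y = 0"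
    using C0_interpolation_unbounded[OF assms(1-6)] by blast
  let ?r = "\<lambda>w::complex. w / complex_of_real (max 1 (cmod w))"
  note r = radial_retraction_unit_disc
  show thesis
  proof (rule that[of "\<lambda>y. ?r (G y)"])
    show "(\<lambda>y. ?r (G y)) \<in> C0 X"
      using C0_compose_contraction[OF G(1) r(1,3)] .
    show "cmod (?r (G y)) \<le> 1" for y by (rule r(2))
    show "?r (G (z i)) = u i" if "i \<in> I" for i using G(2) r(4) u that by simp
    show "?r (G y) = 0" if "y \<in> C" for y using G(3) that by simp
  qed
qed

section \<open>Bounded operators and weighted composition series\<close>

lemma bounded_op_cmult:
  "bounded_op X S \<Longrightarrow> f \<in> C0 X \<Longrightarrow> S (\<lambda>x. c * f x) = (\<lambda>x. c * S f x)"
  unfolding bounded_op_def by blast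

lemma bounded_op_C0: "bounded_op X S \<Longrightarrow> f \<in> C0 X \<Longrightarrow> S f \<in> C0 X"
  unfolding bounded_op_def by blast

lemma bounded_op_unit_ball_bound:
  assumes "bounded_op X S"
  obtains K where "\<And>f x. f \<in> C0 X \<Longrightarrow> (\<And>y. cmod (f y) \<le> 1) \<Longrightarrow> cmod (S f x) \<le> K"
proof -
  obtain K where K: "\<And>f. f \<in> C0 X \<Longrightarrow> sup_norm X (S f) \<le> K * sup_norm X f"
    using assms unfolding bounded_op_def by blast
  have "cmod (S f x) \<le> max K 0" if f: "f \<in> C0 X" and f1: "\<And>y. cmod (f y) \<le> 1" for f x
  proof -
    have "sup_norm X f \<le> 1" using f1 by (intro sup_norm_le) auto
    then have "K * sup_norm X f \<le> max K 0"
      using sup_norm_nonneg[OF f] by (metis max.cobounded1 max.cobounded2 mult_left_le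
          mult_nonneg_nonpos2 nle_le order_trans)
    then show ?thesis
      using norm_le_sup_norm[OF bounded_op_C0[OF assms f], of x] K[OF f] by linarith
  qed
  then show thesis by (rule that)
qed

definition comp_series ::
    "'a topology \<Rightarrow> (nat \<Rightarrow> complex) \<Rightarrow> (nat \<Rightarrow> 'a \<Rightarrow> 'a) \<Rightarrow> ('a \<Rightarrow> complex) \<Rightarrow> ('a \<Rightarrow> complex)" where
  "comp_series X c \<phi> g = (\<lambda>x. if x \<in> topspace X then (\<Sum>k. c k * g (\<phi> k x)) else 0)"

lemma comp_series_terms:
  assumes c: "summable (\<lambda>k. cmod (c k))" and g: "g \<in> C0 X"
  shows "summable (\<lambda>k. c k * g (\<phi> k x))"
    and "cmod (\<Sum>k. c k * g (\<phi> k x)) \<le> (\<Sum>k. cmod (c k)) * sup_norm X g"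
proof -
  have b: "norm (c k * g (\<phi> k x)) \<le> cmod (c k) * sup_norm X g" for k
    unfolding norm_mult by (rule mult_left_mono[OF norm_le_sup_norm[OF g]]) simp
  have s: "summable (\<lambda>k. cmod (c k) * sup_norm X g)" by (rule summable_mult2[OF c])
  show "summable (\<lambda>k. c k * g (\<phi> k x))"
    by (rule summable_comparison_test'[OF s b])
  have "cmod (\<Sum>k. c k * g (\<phi> k x)) \<le> (\<Sum>k. cmod (c k) * sup_norm X g)"
    by (rule norm_suminf_le[OF b s])
  also have "\<dots> = (\<Sum>k. cmod (c k)) * sup_norm X g" by (rule suminf_mult2[OF c, symmetric])
  finally show "cmod (\<Sum>k. c k * g (\<phi> k x)) \<le> (\<Sum>k. cmod (c k)) * sup_norm X g" .
qed

lemma C0_comp_series: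
  assumes \<phi>: "\<And>k. continuous_map X X (\<phi> k)" "\<And>k. proper_map X X (\<phi> k)"
    and c: "summable (\<lambda>k. cmod (c k))" and g: "g \<in> C0 X"
  shows "comp_series X c \<phi> g \<in> C0 X"
proof (rule C0_uniform_limit[where F="\<lambda>N x. \<Sum>k<N. c k * comp_op X (\<phi> k) g x"])
  show "(\<lambda>x. \<Sum>k<N. c k * comp_op X (\<phi> k) g x) \<in> C0 X" for N
    by (intro C0_sum C0_cmult C0_comp_op \<phi> g)
  show "comp_series X c \<phi> g x = 0" if "x \<notin> topspace X" for x
    using that by (simp add: comp_series_def)
  fix e :: real assume e: "e > 0"
  define B where "B = sup_norm X g"
  have B0: "0 \<le> B" unfolding B_def by (rule sup_norm_nonneg[OF g])
  obtain N where N: "\<And>n. n \<ge> N \<Longrightarrow> norm (\<Sum>i. cmod (c (i + n))) < e / (B + 1)"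
    using suminf_exist_split[OF _ c, of "e / (B + 1)"] e B0 by auto
  show "\<forall>\<^sub>F n in sequentially. \<forall>x\<in>topspace X.
      cmod ((\<Sum>k<n. c k * comp_op X (\<phi> k) g x) - comp_series X c \<phi> g x) < e"
  proof (rule eventually_sequentiallyI[of N], intro ballI)
    fix n x assume n: "N \<le> n" and x: "x \<in> topspace X"
    have "(\<Sum>k<n. c k * comp_op X (\<phi> k) g x) - comp_series X c \<phi> g x
        = - (\<Sum>k. c (k + n) * g (\<phi> (k + n) x))"
      using x suminf_split_initial_segment[OF comp_series_terms(1)[OF c g], of \<phi> x n]
      by (simp add: comp_series_def comp_op_def)
    moreover have "cmod (\<Sum>k. c (k + n) * g (\<phi> (k + n) x)) \<le> (\<Sum>k. cmod (c (k + n))) * B"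
      unfolding B_def by (rule comp_series_terms(2)[OF summable_ignore_initial_segment[OF c] g])
    moreover have "(\<Sum>k. cmod (c (k + n))) * B \<le> e / (B + 1) * B"
      using N[OF n] B0 by (intro mult_right_mono) auto
    moreover have "e / (B + 1) * B < e"
      using e B0 by (simp add: field_simps)
    ultimately show "cmod ((\<Sum>k<n. c k * comp_op X (\<phi> k) g x) - comp_series X c \<phi> g x) < e"
      by simp
  qed
qed

lemma bounded_op_comp_series:
  assumes \<phi>: "\<And>k. continuous_map X X (\<phi> k)" "\<And>k. proper_map X X (\<phi> k)"
    and c: "summable (\<lambda>k. cmod (c k))"
  shows "bounded_op X (comp_series X c \<phi>)"
  unfolding bounded_op_def
proof (intro conjI ballI allI exI)
  fix f assume f: "f \<in> C0 X"
  show "comp_series X c \<phi> f \<in> C0 X" by (rule C0_comp_series[OF \<phi> c f])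
  show "comp_series X c \<phi> (\<lambda>x. a * f x) = (\<lambda>x. a * comp_series X c \<phi> f x)" for a
  proof
    fix x
    show "comp_series X c \<phi> (\<lambda>x. a * f x) x = a * comp_series X c \<phi> f x"
      using suminf_mult[OF comp_series_terms(1)[OF c f, of \<phi> x], of a]
      by (simp add: comp_series_def mult.left_commute)
  qed
  show "sup_norm X (comp_series X c \<phi> f) \<le> (\<Sum>k. cmod (c k)) * sup_norm X f"
    using comp_series_terms(2)[OF c f] suminf_nonneg[OF c] sup_norm_nonneg[OF f]
    by (intro sup_norm_le) (simp_all add: comp_series_def)
next
  fix f g assume f: "f \<in> C0 X" and g: "g \<in> C0 X"
  show "comp_series X c \<phi> (\<lambda>x. f x + g x) = (\<lambda>x. comp_series X c \<phi> f x + comp_series X c \<phi> g x)"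
  proof
    fix x
    show "comp_series X c \<phi> (\<lambda>x. f x + g x) x = comp_series X c \<phi> f x + comp_series X c \<phi> g x"
      using suminf_add[OF comp_series_terms(1)[OF c f, of \<phi> x] comp_series_terms(1)[OF c g, of \<phi> x]]
      by (simp add: comp_series_def distrib_left)
  qed
qed

lemma comp_series_split:
  assumes "summable (\<lambda>k. cmod (c k))" "g \<in> C0 X" "x \<in> topspace X"
  shows "comp_series X c \<phi> g x = (\<Sum>k<n. c k * g (\<phi> k x)) + (\<Sum>k. c (k + n) * g (\<phi> (k + n) x))"
  using suminf_split_initial_segment[OF comp_series_terms(1)[OF assms(1,2)], of \<phi> x n] assms(3)
  by (simp add: comp_series_def)

lemma summable_geometric_times_bounded:
  fixes \<mu> :: complex
  assumes "cmod \<mu> < 1" "\<And>j. cmod (v j) \<le> B"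
  shows "summable (\<lambda>j. \<mu> ^ j * v j)"
proof (rule summable_comparison_test')
  show "summable (\<lambda>j. cmod \<mu> ^ j * B)"
    using assms(1) by (intro summable_mult2 summable_geometric) simp
  show "norm (\<mu> ^ j * v j) \<le> cmod \<mu> ^ j * B" for j
    unfolding norm_mult norm_power by (rule mult_left_mono[OF assms(2)]) simp
qed

lemma suminf_geometric_telescope:
  fixes \<mu> :: complex
  assumes "cmod \<mu> < 1" "\<And>j. cmod (v j) \<le> B"
  shows "(\<Sum>j. \<mu> ^ j * v j - \<mu> ^ Suc j * v (Suc j)) = v 0"
proof -
  have "(\<lambda>j. \<mu> ^ j * v j) \<longlonglongrightarrow> 0"
    by (rule summable_LIMSEQ_zero[OF summable_geometric_times_bounded[OF assms]])
  from sums_unique[OF telescope_sums'[OF this]] show ?thesis by simp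
qed

lemma summable_norm_geometric:
  fixes \<mu> :: complex
  shows "cmod \<mu> < 1 \<Longrightarrow> summable (\<lambda>k. cmod (a * \<mu> ^ k))"
  by (simp add: norm_mult norm_power summable_geometric)

lemma summable_norm_eventually_geometric:
  fixes l :: complex
  assumes "cmod l < 1"
  shows "summable (\<lambda>k. cmod (if k < n then a k else b * l ^ (k - n)))"
  using summable_norm_geometric[OF assms, of b]
  by (subst summable_iff_shift[symmetric, of _ n]) simp

lemma neumann_term_telescope:
  fixes l \<mu> :: complex
  assumes "l * \<mu> = 1"
  shows "- (\<mu> * \<mu> ^ k) * (a - l * b) = \<mu> ^ k * b - \<mu> ^ Suc k * a"
proof -
  have "l * (\<mu> * \<mu> ^ k) = \<mu> ^ k" using assms by (simp add: mult.assoc[symmetric])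
  then show ?thesis by (simp add: algebra_simps)
qed

lemma sum_neumann_telescope:
  fixes l \<mu> :: complex
  assumes "l * \<mu> = 1"
  shows "(\<Sum>k<n. - (\<mu> * \<mu> ^ k) * (v (Suc k) - l * v k)) = v 0 - \<mu> ^ n * v n"
  unfolding neumann_term_telescope[OF assms]
  using sum_lessThan_telescope'[of "\<lambda>k. \<mu> ^ k * v k" n] by simp

lemma suminf_neumann_telescope:
  fixes l \<mu> :: complex
  assumes "cmod \<mu> < 1" "l * \<mu> = 1" "\<And>k. cmod (v k) \<le> B"
  shows "(\<Sum>k. - (\<mu> * \<mu> ^ k) * (v (Suc k) - l * v k)) = v 0"
  unfolding neumann_term_telescope[OF assms(2)]
  by (rule suminf_geometric_telescope[of \<mu> v, OF assms(1,3)])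

lemma suminf_backward_telescope:
  fixes l :: complex
  assumes "cmod l < 1" "\<And>k. cmod (v k) \<le> B"
  shows "(\<Sum>j. l ^ j * (v j - l * v (Suc j))) = v 0"
  using suminf_geometric_telescope[of l v, OF assms] by (simp add: algebra_simps)

lemma continuous_map_funpow: "continuous_map X X \<tau> \<Longrightarrow> continuous_map X X (\<tau> ^^ n)"
  by (induction n) (auto intro: continuous_map_compose)

lemma proper_map_funpow: "proper_map X X \<tau> \<Longrightarrow> proper_map X X (\<tau> ^^ n)"
  by (induction n) (auto intro: proper_map_compose simp: id_def[symmetric])

lemma funpow_in_topspace: "continuous_map X X \<tau> \<Longrightarrow> x \<in> topspace X \<Longrightarrow> (\<tau> ^^ n) x \<in> topspace X"
  by (induction n) (auto simp: continuous_map_def Pi_iff)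

lemma closedin_funpow_image:
  "proper_map X X \<tau> \<Longrightarrow> closedin X ((\<tau> ^^ n) ` topspace X)"
  using proper_imp_closed_map[OF proper_map_funpow] unfolding closed_map_def by blast

lemma funpow_image_antimono:
  assumes "continuous_map X X \<tau>" "m \<le> n"
  shows "(\<tau> ^^ n) ` topspace X \<subseteq> (\<tau> ^^ m) ` topspace X"
proof -
  have "(\<tau> ^^ n) ` topspace X = (\<tau> ^^ m) ` (\<tau> ^^ (n - m)) ` topspace X"
    using assms(2) by (simp add: image_comp flip: funpow_add)
  then show ?thesis using funpow_in_topspace[OF assms(1)] by blast
qed

lemma not_in_op_spectrumI:
  assumes "bounded_op X S"
    and "\<And>f. f \<in> C0 X \<Longrightarrow> S (\<lambda>x. T f x - l * f x) = f"
    and "\<And>g. g \<in> C0 X \<Longrightarrow> (\<lambda>x. T (S g) x - l * S g x) = g"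
  shows "l \<notin> op_spectrum X T"
  using assms unfolding op_spectrum_def by blast

lemma not_in_op_spectrumE:
  assumes "l \<notin> op_spectrum X T"
  obtains S where "bounded_op X S"
    and "\<And>f. f \<in> C0 X \<Longrightarrow> S (\<lambda>x. T f x - l * f x) = f"
    and "\<And>g. g \<in> C0 X \<Longrightarrow> (\<lambda>x. T (S g) x - l * S g x) = g"
  using assms unfolding op_spectrum_def by blast

lemma not_in_op_spectrum_if_norm_gt_one:
  fixes l :: complex
  assumes cont: "continuous_map X X \<tau>" and pr: "proper_map X X \<tau>" and l: "1 < cmod l"
  shows "l \<notin> op_spectrum X (comp_op X \<tau>)"
proof -
  define \<mu> where "\<mu> = 1 / l"
  have \<mu>: "cmod \<mu> < 1" "l * \<mu> = 1"
    using l by (auto simp: \<mu>_def norm_divide divide_less_eq)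
  define c where "c k = - (\<mu> * \<mu> ^ k)" for k
  have c: "summable (\<lambda>k. cmod (c k))"
    unfolding c_def using summable_norm_geometric[OF \<mu>(1), of \<mu>] by simp
  define S where "S = comp_series X c (\<lambda>k. \<tau> ^^ k)"
  have tele: "(\<Sum>k. c k * (h ((\<tau> ^^ Suc k) x) - l * h ((\<tau> ^^ k) x))) = h x"
    if h: "h \<in> C0 X" for h x
    unfolding c_def
    using suminf_neumann_telescope[where v="\<lambda>k. h ((\<tau> ^^ k) x)" and B="sup_norm X h",
        OF \<mu> norm_le_sup_norm[OF h]]
    by (simp del: funpow.simps)
  show ?thesis
  proof (rule not_in_op_spectrumI)
    show "bounded_op X S"
      unfolding S_def by (rule bounded_op_comp_series[OF continuous_map_funpow[OF cont]
            proper_map_funpow[OF pr] c])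
    show "S (\<lambda>x. comp_op X \<tau> f x - l * f x) = f" if f: "f \<in> C0 X" for f
    proof
      fix x show "S (\<lambda>x. comp_op X \<tau> f x - l * f x) x = f x"
        using tele[OF f, of x] funpow_in_topspace[OF cont, of x] C0_D(3)[OF f, of x]
        by (auto simp: S_def comp_series_def comp_op_def)
    qed
    show "(\<lambda>x. comp_op X \<tau> (S g) x - l * S g x) = g" if g: "g \<in> C0 X" for g
    proof
      fix x show "comp_op X \<tau> (S g) x - l * S g x = g x"
      proof (cases "x \<in> topspace X")
        case True
        have "comp_op X \<tau> (S g) x - l * S g x
            = (\<Sum>k. c k * g ((\<tau> ^^ Suc k) x)) - (\<Sum>k. l * (c k * g ((\<tau> ^^ k) x)))"
          using True funpow_in_topspace[OF cont True, of 1]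
            suminf_mult[OF comp_series_terms(1)[OF c g, of "\<lambda>k. \<tau> ^^ k" x], of l]
          by (simp add: comp_op_def S_def comp_series_def funpow_Suc_right del: funpow.simps)
        also have "\<dots> = (\<Sum>k. c k * g ((\<tau> ^^ Suc k) x) - l * (c k * g ((\<tau> ^^ k) x)))"
          by (intro suminf_diff comp_series_terms(1)[OF c g] summable_mult)
        also have "\<dots> = g x"
          using tele[OF g, of x] by (simp add: right_diff_distrib mult.left_commute del: funpow.simps)
        finally show ?thesis .
      qed (simp add: S_def comp_series_def comp_op_def C0_D(3)[OF g])
    qed
  qed
qed

section \<open>Inverting inside the disc when the eventual image is stable\<close>

lemma homeomorphic_map_inv_into_invariant:
  assumes cont: "continuous_map X X \<tau>" and pr: "proper_map X X \<tau>"
    and Y: "closedin X Y" "\<tau> ` Y = Y" "inj_on \<tau> Y"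
  shows "homeomorphic_map (subtopology X Y) (subtopology X Y) (inv_into Y \<tau>)"
proof -
  let ?Z = "subtopology X Y"
  have tZ: "topspace ?Z = Y" using closedin_subset[OF Y(1)] by auto
  have "continuous_map ?Z ?Z \<tau>"
    using cont Y(2) unfolding continuous_map_in_subtopology
    by (auto intro: continuous_map_from_subtopology)
  moreover have "closed_map ?Z ?Z \<tau>"
    using closed_map_into_subtopology[OF closed_map_from_subtopology[OF proper_imp_closed_map[OF pr] Y(1)]]
      Y(2) tZ by blast
  ultimately have "homeomorphic_map ?Z ?Z \<tau>"
    using bijective_closed_imp_homeomorphic_map tZ Y(2,3) by metis
  then obtain g where g: "homeomorphic_maps ?Z ?Z \<tau> g" using homeomorphic_map_maps by blast
  then have hg: "homeomorphic_map ?Z ?Z g" and gt: "\<forall>y\<in>Y. \<tau> (g y) = y"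
    using homeomorphic_maps_map tZ by metis+
  have "g y = inv_into Y \<tau> y" if "y \<in> Y" for y
  proof -
    have "g y \<in> Y" using g that tZ unfolding homeomorphic_maps_def continuous_map_def by auto
    then show ?thesis using gt that Y(3) by (metis inv_into_f_f)
  qed
  then show ?thesis using homeomorphic_map_eq[OF hg] tZ by auto
qed

locale bijective_on_eventual_image =
  fixes X :: "'a topology" and \<tau> :: "'a \<Rightarrow> 'a" and n :: nat
  assumes continuous: "continuous_map X X \<tau>" and proper: "proper_map X X \<tau>"
    and image_invariant: "\<tau> ` (\<tau> ^^ n) ` topspace X = (\<tau> ^^ n) ` topspace X"
    and inj_on_image: "inj_on \<tau> ((\<tau> ^^ n) ` topspace X)"
begin

abbreviation Y :: "'a set" where "Y \<equiv> (\<tau> ^^ n) ` topspace X"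

definition inv\<tau> :: "'a \<Rightarrow> 'a" where "inv\<tau> = inv_into Y \<tau>"

lemma funpow_inv\<tau>_in_image: "y \<in> Y \<Longrightarrow> (inv\<tau> ^^ j) y \<in> Y"
  by (induction j) (auto simp: inv\<tau>_def image_invariant intro: inv_into_into)

lemma \<tau>_funpow_inv\<tau>: "y \<in> Y \<Longrightarrow> \<tau> ((inv\<tau> ^^ Suc j) y) = (inv\<tau> ^^ j) y"
  using f_inv_into_f[of _ \<tau> Y] funpow_inv\<tau>_in_image[of y j] image_invariant
  by (simp add: inv\<tau>_def)

lemma funpow_inv\<tau>_\<tau>: "y \<in> Y \<Longrightarrow> (inv\<tau> ^^ Suc j) (\<tau> y) = (inv\<tau> ^^ j) y"
  by (simp add: funpow_Suc_right inv\<tau>_def inv_into_f_f[OF inj_on_image] del: funpow.simps)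

lemma image_subset_topspace: "Y \<subseteq> topspace X"
  using funpow_in_topspace[OF continuous] by blast

lemma continuous_proper_funpow_inv\<tau>:
  shows "continuous_map X X (inv\<tau> ^^ j \<circ> \<tau> ^^ n)" and "proper_map X X (inv\<tau> ^^ j \<circ> \<tau> ^^ n)"
proof -
  let ?Z = "subtopology X Y"
  have Ycl: "closedin X Y" by (rule closedin_funpow_image[OF proper])
  have "homeomorphic_map ?Z ?Z (inv\<tau> ^^ j)"
  proof (induction j)
    case 0 show ?case by (simp add: homeomorphic_map_id id_def[symmetric])
  next
    case (Suc j)
    have "homeomorphic_map ?Z ?Z inv\<tau>"
      unfolding inv\<tau>_def
      by (rule homeomorphic_map_inv_into_invariant[OF continuous proper Ycl image_invariant inj_on_image])
    from homeomorphic_map_compose[OF this Suc.IH] show ?case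
      by (simp add: funpow_Suc_right o_def del: funpow.simps)
  qed
  then have c: "continuous_map ?Z ?Z (inv\<tau> ^^ j)" and p: "proper_map ?Z ?Z (inv\<tau> ^^ j)"
    by (simp_all add: homeomorphic_imp_continuous_map homeomorphic_imp_proper_map)
  have tc: "continuous_map X ?Z (\<tau> ^^ n)"
    using continuous_map_funpow[OF continuous] unfolding continuous_map_in_subtopology by auto
  have tp: "proper_map X ?Z (\<tau> ^^ n)"
    using proper_map_into_subtopology[OF proper_map_funpow[OF proper]] by auto
  have ic: "continuous_map ?Z X id" by (simp add: continuous_map_from_subtopology)
  have ip: "proper_map ?Z X id"
    using closedin_subset[OF Ycl] Ycl closed_Int_compactin by (subst proper_map_inclusion) auto
  show "continuous_map X X (inv\<tau> ^^ j \<circ> \<tau> ^^ n)"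
    using continuous_map_compose[OF continuous_map_compose[OF tc c] ic] by simp
  show "proper_map X X (inv\<tau> ^^ j \<circ> \<tau> ^^ n)"
    using proper_map_compose[OF proper_map_compose[OF tp p] ip] by simp
qed

text \<open>
  The inverse of \<open>\<Phi> - l\<close> for \<open>0 < |l| < 1\<close>:
  \<open>S h = -\<Sum>k<n. l^-(k+1) h \<circ> \<tau>^k  +  l^-n \<Sum>j. l^j h \<circ> inv\<tau>^(j+1) \<circ> \<tau>^n\<close>.
  The first part telescopes \<open>h\<close> down to \<open>l^-n h \<circ> \<tau>^n\<close>, which only sees \<open>Y\<close>, where \<open>\<Phi>\<close> is
  invertible and \<open>\<Phi> - l = \<Phi> (1 - l \<Phi>\<inverse>)\<close> is inverted by a geometric series.
\<close>
definition disc_resolvent :: "complex \<Rightarrow> ('a \<Rightarrow> complex) \<Rightarrow> 'a \<Rightarrow> complex" where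
  "disc_resolvent l = comp_series X
     (\<lambda>k. if k < n then - (1 / l * (1 / l) ^ k) else (1 / l) ^ n * l ^ (k - n))
     (\<lambda>k. if k < n then \<tau> ^^ k else inv\<tau> ^^ Suc (k - n) \<circ> \<tau> ^^ n)"

lemma bounded_op_disc_resolvent:
  assumes "cmod l < 1"
  shows "bounded_op X (disc_resolvent l)"
  unfolding disc_resolvent_def
proof (rule bounded_op_comp_series)
  show "continuous_map X X (if k < n then \<tau> ^^ k else inv\<tau> ^^ Suc (k - n) \<circ> \<tau> ^^ n)"
    and "proper_map X X (if k < n then \<tau> ^^ k else inv\<tau> ^^ Suc (k - n) \<circ> \<tau> ^^ n)" for k
    using continuous_map_funpow[OF continuous] proper_map_funpow[OF proper]
      continuous_proper_funpow_inv\<tau> by (simp_all del: funpow.simps)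
  show "summable (\<lambda>k. cmod (if k < n then - (1 / l * (1 / l) ^ k) else (1 / l) ^ n * l ^ (k - n)))"
    by (rule summable_norm_eventually_geometric[OF assms])
qed

lemma disc_resolvent_eq:
  assumes l: "cmod l < 1" and h: "h \<in> C0 X" and x: "x \<in> topspace X"
  shows "disc_resolvent l h x = (\<Sum>k<n. - (1 / l * (1 / l) ^ k) * h ((\<tau> ^^ k) x))
      + (1 / l) ^ n * (\<Sum>j. l ^ j * h ((inv\<tau> ^^ Suc j) ((\<tau> ^^ n) x)))"
proof -
  have "summable (\<lambda>j. l ^ j * h ((inv\<tau> ^^ Suc j) ((\<tau> ^^ n) x)))"
    using summable_geometric_times_bounded[OF l norm_le_sup_norm[OF h]] .
  from suminf_mult[OF this, of "(1 / l) ^ n"] show ?thesis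
    unfolding disc_resolvent_def
    by (subst comp_series_split[where n=n, OF _ h x])
      (auto intro: summable_norm_eventually_geometric[OF l] simp: mult.assoc simp del: funpow.simps)
qed

lemma disc_resolvent_outside: "x \<notin> topspace X \<Longrightarrow> disc_resolvent l h x = 0"
  by (simp add: disc_resolvent_def comp_series_def)

lemma backward_series_shift:
  assumes l: "cmod l < 1" and h: "h \<in> C0 X" and y: "y \<in> Y"
  shows "(\<Sum>j. l ^ j * h ((inv\<tau> ^^ Suc j) (\<tau> y))) - l * (\<Sum>j. l ^ j * h ((inv\<tau> ^^ Suc j) y)) = h y"
proof -
  let ?v = "\<lambda>j. h ((inv\<tau> ^^ j) y)"
  have sv: "summable (\<lambda>j. l ^ j * ?v j)" "summable (\<lambda>j. l ^ j * ?v (Suc j))"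
    using summable_geometric_times_bounded[where v="?v", OF l norm_le_sup_norm[OF h]]
      summable_geometric_times_bounded[where v="\<lambda>j. ?v (Suc j)", OF l norm_le_sup_norm[OF h]]
    by simp_all
  have "(\<Sum>j. l ^ j * h ((inv\<tau> ^^ Suc j) (\<tau> y))) = (\<Sum>j. l ^ j * ?v j)"
    using funpow_inv\<tau>_\<tau>[OF y] by (simp del: funpow.simps)
  moreover have "l * (\<Sum>j. l ^ j * ?v (Suc j)) = (\<Sum>j. l * (l ^ j * ?v (Suc j)))"
    using suminf_mult[OF sv(2)] by simp
  moreover have "(\<Sum>j. l ^ j * ?v j) - (\<Sum>j. l * (l ^ j * ?v (Suc j)))
      = (\<Sum>j. l ^ j * (?v j - l * ?v (Suc j)))"
    using suminf_diff[OF sv(1) summable_mult[OF sv(2), of l]] by (simp add: algebra_simps)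
  moreover have "(\<Sum>j. l ^ j * (?v j - l * ?v (Suc j))) = h y"
    using suminf_backward_telescope[where v="?v", OF l norm_le_sup_norm[OF h]] by simp
  ultimately show ?thesis by (simp del: funpow.simps)
qed

lemma disc_resolvent_left_inverse:
  assumes l: "0 < cmod l" "cmod l < 1" and f: "f \<in> C0 X"
  shows "disc_resolvent l (\<lambda>x. comp_op X \<tau> f x - l * f x) = f"
proof
  fix x
  let ?g = "\<lambda>x. comp_op X \<tau> f x - l * f x"
  have g: "?g \<in> C0 X"
    using C0_add[OF C0_comp_op[OF continuous proper f] C0_cmult[OF f, of "- l"]] by simp
  have g_eq: "?g z = f (\<tau> z) - l * f z" if "z \<in> topspace X" for z
    using that by (simp add: comp_op_def)
  have lm: "l * (1 / l) = 1" using l by auto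
  show "disc_resolvent l ?g x = f x"
  proof (cases "x \<in> topspace X")
    case True
    let ?y = "(\<tau> ^^ n) x"
    have "(\<Sum>k<n. - (1 / l * (1 / l) ^ k) * ?g ((\<tau> ^^ k) x)) = f x - (1 / l) ^ n * f ?y"
      using sum_neumann_telescope[OF lm, of "\<lambda>k. f ((\<tau> ^^ k) x)" n]
        g_eq[OF funpow_in_topspace[OF continuous True]] by simp
    moreover have "(\<Sum>j. l ^ j * ?g ((inv\<tau> ^^ Suc j) ?y)) = f ?y"
    proof -
      have "?g ((inv\<tau> ^^ Suc j) ?y) = f ((inv\<tau> ^^ j) ?y) - l * f ((inv\<tau> ^^ Suc j) ?y)" for j
        using g_eq \<tau>_funpow_inv\<tau> funpow_inv\<tau>_in_image image_subset_topspace True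
        by (metis image_eqI subsetD)
      then show ?thesis
        using suminf_backward_telescope[where v="\<lambda>j. f ((inv\<tau> ^^ j) ?y)", OF l(2) norm_le_sup_norm[OF f]]
        by (simp del: funpow.simps)
    qed
    ultimately show ?thesis using disc_resolvent_eq[OF l(2) g True] by simp
  qed (simp add: disc_resolvent_outside C0_D(3)[OF f])
qed

lemma disc_resolvent_right_inverse:
  assumes l: "0 < cmod l" "cmod l < 1" and g: "g \<in> C0 X"
  shows "(\<lambda>x. comp_op X \<tau> (disc_resolvent l g) x - l * disc_resolvent l g x) = g"
proof
  fix x
  let ?S = "disc_resolvent l g" and ?c = "\<lambda>k. - (1 / l * (1 / l) ^ k)"
    and ?B = "\<lambda>y. \<Sum>j. l ^ j * g ((inv\<tau> ^^ Suc j) y)"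
  have lm: "l * (1 / l) = 1" using l by auto
  show "comp_op X \<tau> ?S x - l * ?S x = g x"
  proof (cases "x \<in> topspace X")
    case True
    let ?y = "(\<tau> ^^ n) x"
    have \<tau>x: "\<tau> x \<in> topspace X" using continuous True by (auto simp: continuous_map_def)
    have shift: "(\<Sum>k<n. c k * a (Suc k)) - l * (\<Sum>k<n. c k * a k)
        = (\<Sum>k<n. c k * (a (Suc k) - l * a k))" for c a :: "nat \<Rightarrow> complex"
      by (simp add: sum_distrib_left sum_subtractf right_diff_distrib mult.left_commute)
    have "(\<tau> ^^ k) (\<tau> x) = (\<tau> ^^ Suc k) x" for k
      by (simp add: funpow_Suc_right del: funpow.simps)
    then have A: "(\<Sum>k<n. ?c k * g ((\<tau> ^^ k) (\<tau> x))) - l * (\<Sum>k<n. ?c k * g ((\<tau> ^^ k) x))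
        = g x - (1 / l) ^ n * g ?y"
      using shift[of ?c "\<lambda>k. g ((\<tau> ^^ k) x)"] sum_neumann_telescope[OF lm, of "\<lambda>k. g ((\<tau> ^^ k) x)" n]
      by (simp only: funpow_0)
    have B: "?B (\<tau> ?y) - l * ?B ?y = g ?y"
      using backward_series_shift[OF l(2) g] True by blast
    have "comp_op X \<tau> ?S x - l * ?S x
        = ((\<Sum>k<n. ?c k * g ((\<tau> ^^ k) (\<tau> x))) - l * (\<Sum>k<n. ?c k * g ((\<tau> ^^ k) x)))
          + (1 / l) ^ n * (?B (\<tau> ?y) - l * ?B ?y)"
      using True disc_resolvent_eq[OF l(2) g True] disc_resolvent_eq[OF l(2) g \<tau>x]
      by (simp add: comp_op_def funpow_swap1 right_diff_distrib distrib_left mult.left_commute)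
    then show ?thesis unfolding A B by simp
  qed (simp add: comp_op_def disc_resolvent_outside C0_D(3)[OF g])
qed

lemma not_in_op_spectrum_inside_disc:
  assumes "0 < cmod l" "cmod l < 1"
  shows "l \<notin> op_spectrum X (comp_op X \<tau>)"
  using not_in_op_spectrumI[OF bounded_op_disc_resolvent disc_resolvent_left_inverse
      disc_resolvent_right_inverse] assms by blast

end

section \<open>Power-sum estimates for one-sided inverses\<close>

lemma comp_op_minus_power_sum:
  fixes l :: complex and h :: "'a \<Rightarrow> complex" and n :: nat
  assumes cont: "continuous_map X X \<tau>" and x: "x \<in> topspace X"
  defines "f \<equiv> \<lambda>x. \<Sum>j\<le>n. l ^ (n - j) * comp_op X (\<tau> ^^ j) h x"
  shows "comp_op X \<tau> f x - l * f x = h ((\<tau> ^^ Suc n) x) - l ^ Suc n * h x"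
proof -
  define A where "A j = l ^ (Suc n - j) * h ((\<tau> ^^ j) x)" for j
  have \<tau>x: "\<tau> x \<in> topspace X" using cont x by (auto simp: continuous_map_def)
  have "comp_op X \<tau> f x = (\<Sum>j<Suc n. A (Suc j))"
    using x \<tau>x unfolding A_def f_def lessThan_Suc_atMost
    by (simp add: comp_op_def funpow_Suc_right del: funpow.simps)
  moreover have "l * f x = (\<Sum>j<Suc n. A j)"
    using x unfolding A_def f_def lessThan_Suc_atMost sum_distrib_left
    by (intro sum.cong) (auto simp: comp_op_def Suc_diff_le)
  ultimately have "comp_op X \<tau> f x - l * f x = A (Suc n) - A 0"
    by (simp only: sum_subtractf[symmetric] sum_lessThan_telescope)
  then show ?thesis by (simp add: A_def)
qed

lemma funpow_mem_funpow_image: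
  assumes "continuous_map X X \<tau>" "w \<in> topspace X" "m \<le> k"
  shows "(\<tau> ^^ k) w \<in> (\<tau> ^^ m) ` topspace X"
  using funpow_image_antimono[OF assms(1,3)] assms(2) by blast

lemma orbit_before_leaving_image:
  assumes cont: "continuous_map X X \<tau>" and z: "z \<in> topspace X"
    and out: "(\<tau> ^^ n) z \<notin> (\<tau> ^^ Suc n) ` topspace X"
  shows "inj_on (\<lambda>j. (\<tau> ^^ j) z) {..n}"
    and "\<And>j. j \<le> n \<Longrightarrow> (\<tau> ^^ j) z \<notin> (\<tau> ^^ Suc n) ` topspace X"
proof -
  have split_at: "(\<tau> ^^ n) z = (\<tau> ^^ (n - j)) ((\<tau> ^^ j) z)" if "j \<le> n" for j
    using that by (metis comp_apply funpow_add le_add_diff_inverse2)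
  show "inj_on (\<lambda>j. (\<tau> ^^ j) z) {..n}"
  proof (rule linorder_inj_onI')
    fix i j assume ij: "i \<in> {..n}" "j \<in> {..n}" "i < j"
    show "(\<tau> ^^ i) z \<noteq> (\<tau> ^^ j) z"
    proof
      assume "(\<tau> ^^ i) z = (\<tau> ^^ j) z"
      then have "(\<tau> ^^ n) z = (\<tau> ^^ (n - i + j)) z"
        using split_at[of i] ij by (metis comp_apply funpow_add atMost_iff)
      moreover have "(\<tau> ^^ (n - i + j)) z \<in> (\<tau> ^^ Suc n) ` topspace X"
        using ij by (intro funpow_mem_funpow_image[OF cont z]) auto
      ultimately show False using out by metis
    qed
  qed
  show "(\<tau> ^^ j) z \<notin> (\<tau> ^^ Suc n) ` topspace X" if j: "j \<le> n" for j
  proof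
    assume "(\<tau> ^^ j) z \<in> (\<tau> ^^ Suc n) ` topspace X"
    then obtain w where w: "w \<in> topspace X" "(\<tau> ^^ j) z = (\<tau> ^^ Suc n) w" by blast
    then have "(\<tau> ^^ n) z = (\<tau> ^^ (n - j + Suc n)) w"
      using split_at[OF j] by (metis comp_apply funpow_add)
    moreover have "(\<tau> ^^ (n - j + Suc n)) w \<in> (\<tau> ^^ Suc n) ` topspace X"
      by (rule funpow_mem_funpow_image[OF cont w(1)]) simp
    ultimately show False using out by metis
  qed
qed

lemma left_resolvent_power_sum_bound:
  fixes l :: complex
  assumes H: "Hausdorff_space X" and L: "locally_compact_space X"
    and cont: "continuous_map X X \<tau>" and pr: "proper_map X X \<tau>"
    and S: "bounded_op X S" "\<And>f. f \<in> C0 X \<Longrightarrow> S (\<lambda>x. comp_op X \<tau> f x - l * f x) = f"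
    and K: "\<And>f x. f \<in> C0 X \<Longrightarrow> (\<And>y. cmod (f y) \<le> 1) \<Longrightarrow> cmod (S f x) \<le> K"
    and z: "z \<in> topspace X" "(\<tau> ^^ n) z \<notin> (\<tau> ^^ Suc n) ` topspace X"
    and u: "\<And>k. k \<le> n \<Longrightarrow> cmod (u k) \<le> 1"
  shows "cmod (\<Sum>k\<le>n. l ^ k * u k) \<le> K * cmod l ^ Suc n"
proof -
  \<comment> \<open>With \<open>h\<close> interpolating \<open>u\<close> backwards along the orbit of \<open>z\<close> and vanishing on \<open>\<tau>^(n+1)(X)\<close>,
     \<open>f = \<Sum>j\<le>n. l^(n-j) h \<circ> \<tau>^j\<close> satisfies \<open>(\<Phi> - l) f = -l^(n+1) h\<close>; now evaluate \<open>f = S ((\<Phi> - l) f)\<close> at \<open>z\<close>.\<close>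
  let ?C = "(\<tau> ^^ Suc n) ` topspace X"
  have "(\<lambda>j. (\<tau> ^^ j) z) ` {..n} \<subseteq> topspace X - ?C"
    using orbit_before_leaving_image(2)[OF cont z] funpow_in_topspace[OF cont z(1)] by auto
  then obtain h where h: "h \<in> C0 X" "\<And>y. cmod (h y) \<le> 1"
    "\<And>j. j \<in> {..n} \<Longrightarrow> h ((\<tau> ^^ j) z) = u (n - j)" "\<And>y. y \<in> ?C \<Longrightarrow> h y = 0"
    using C0_interpolation[OF H L closedin_funpow_image[OF pr, of "Suc n"] finite_atMost
        orbit_before_leaving_image(1)[OF cont z], where u="\<lambda>j. u (n - j)"] u by auto
  define f where "f x = (\<Sum>j\<le>n. l ^ (n - j) * comp_op X (\<tau> ^^ j) h x)" for x
  have f: "f \<in> C0 X" unfolding f_def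
    by (intro C0_sum C0_cmult C0_comp_op continuous_map_funpow[OF cont] proper_map_funpow[OF pr] h(1))
  have "(\<lambda>x. comp_op X \<tau> f x - l * f x) = (\<lambda>x. - (l ^ Suc n) * h x)"
  proof
    fix x show "comp_op X \<tau> f x - l * f x = - (l ^ Suc n) * h x"
      using comp_op_minus_power_sum[OF cont, where x=x and n=n and l=l and h=h] h(4) C0_D(3)[OF h(1)]
      by (cases "x \<in> topspace X") (auto simp: f_def comp_op_def)
  qed
  then have "f = (\<lambda>x. - (l ^ Suc n) * S h x)"
    using S(2)[OF f] bounded_op_cmult[OF S(1) h(1)] by metis
  moreover have "f z = (\<Sum>k\<le>n. l ^ k * u k)"
  proof -
    have "f z = (\<Sum>j\<le>n. l ^ (n - j) * u (n - j))"
      unfolding f_def comp_op_def using z(1) h(3) by simp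
    also have "\<dots> = (\<Sum>k\<le>n. l ^ k * u k)"
      using sum.atLeastAtMost_rev[of "\<lambda>k. l ^ k * u k" 0 n] by (simp add: atLeast0AtMost)
    finally show ?thesis .
  qed
  ultimately have "cmod (\<Sum>k\<le>n. l ^ k * u k) = cmod l ^ Suc n * cmod (S h z)"
    by (metis norm_minus_cancel norm_mult norm_power)
  also have "\<dots> \<le> cmod l ^ Suc n * K"
    using K[OF h(1,2)] by (intro mult_left_mono) simp_all
  finally show ?thesis by (simp add: mult.commute)
qed

lemma power_sum_along_backward_chains:
  fixes l :: complex
  assumes g: "\<And>x. x \<in> topspace X \<Longrightarrow> g x = f (\<tau> x) - l * f x"
    and a: "\<And>k. a k \<in> topspace X" "\<And>k. \<tau> (a (Suc k)) = a k"
    and b: "\<And>k. b k \<in> topspace X" "\<And>k. \<tau> (b (Suc k)) = b k"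
    and ab: "\<tau> (a 0) = \<tau> (b 0)"
  shows "(\<Sum>k\<le>m. l ^ k * (g (a k) - g (b k))) = - (l ^ Suc m * (f (a m) - f (b m)))"
proof (induction m)
  case 0
  then show ?case using g[OF a(1)] g[OF b(1)] ab by (simp add: algebra_simps)
next
  case (Suc m)
  have "f (a m) = g (a (Suc m)) + l * f (a (Suc m))" "f (b m) = g (b (Suc m)) + l * f (b (Suc m))"
    using g[OF a(1)] g[OF b(1)] a(2) b(2) by simp_all
  then show ?case using Suc by (simp add: algebra_simps)
qed

lemma right_resolvent_power_sum_bound:
  fixes l :: complex
  assumes H: "Hausdorff_space X" and L: "locally_compact_space X"
    and S: "bounded_op X S" "\<And>g. g \<in> C0 X \<Longrightarrow> (\<lambda>x. comp_op X \<tau> (S g) x - l * S g x) = g"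
    and K: "\<And>f x. f \<in> C0 X \<Longrightarrow> (\<And>y. cmod (f y) \<le> 1) \<Longrightarrow> cmod (S f x) \<le> K"
    and a: "\<And>k. a k \<in> topspace X" "\<And>k. \<tau> (a (Suc k)) = a k"
    and b: "\<And>k. b k \<in> topspace X" "\<And>k. \<tau> (b (Suc k)) = b k"
    and ab: "\<tau> (a 0) = \<tau> (b 0)" and b_inj: "inj_on b {..n}"
    and disj: "\<And>j k. j \<le> n \<Longrightarrow> k \<le> n \<Longrightarrow> a j \<noteq> b k"
    and u: "\<And>k. k \<le> n \<Longrightarrow> cmod (u k) \<le> 1"
  shows "cmod (\<Sum>k\<le>n. l ^ k * u k) \<le> 2 * K * cmod l ^ Suc n"
proof -
  \<comment> \<open>\<open>f = S g\<close> solves \<open>f \<circ> \<tau> - l f = g\<close>; telescoping along both chains expresses the power sum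
     through \<open>f (a n) - f (b n)\<close>, because \<open>g\<close> equals \<open>u\<close> on the \<open>b\<close>-chain and vanishes on the \<open>a\<close>-chain.\<close>
  let ?C = "a ` {..n}"
  have C: "closedin X ?C"
    using Hausdorff_imp_t1_space[OF H] a(1) unfolding t1_space_closedin_finite by auto
  have "b ` {..n} \<subseteq> topspace X - ?C"
    using b(1) disj by blast
  then obtain g where g: "g \<in> C0 X" "\<And>y. cmod (g y) \<le> 1"
    "\<And>k. k \<in> {..n} \<Longrightarrow> g (b k) = u k" "\<And>y. y \<in> ?C \<Longrightarrow> g y = 0"
    using C0_interpolation[OF H L C finite_atMost b_inj, where u=u] u by auto
  let ?f = "S g"
  have gf: "g x = ?f (\<tau> x) - l * ?f x" if "x \<in> topspace X" for x
    using fun_cong[OF S(2)[OF g(1)], of x] that by (simp add: comp_op_def)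
  from power_sum_along_backward_chains[where g=g and f="?f" and m=n, OF gf a b ab]
  have "cmod (\<Sum>k\<le>n. l ^ k * u k) = cmod l ^ Suc n * cmod (?f (a n) - ?f (b n))"
    using g(3,4) by (simp add: sum_negf norm_mult norm_power)
  also have "\<dots> \<le> cmod l ^ Suc n * (2 * K)"
    using norm_triangle_ineq4[of "?f (a n)" "?f (b n)"] K[OF g(1,2), of "a n"] K[OF g(1,2), of "b n"]
    by (intro mult_left_mono) simp_all
  finally show ?thesis by (simp add: mult.commute mult.left_commute)
qed

lemma one_lt_norm_if_power_sums_bounded:
  fixes l :: complex
  assumes bound: "\<And>n u. (\<And>k. k \<le> n \<Longrightarrow> cmod (u k) \<le> 1) \<Longrightarrow>
      cmod (\<Sum>k\<le>n. l ^ k * u k) \<le> K * cmod l ^ Suc n"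
  shows "1 < cmod l"
proof (rule ccontr)
  assume "\<not> 1 < cmod l"
  then consider "cmod l < 1" | "cmod l = 1" by linarith
  then show False
  proof cases
    case 1
    have "(\<lambda>n. K * cmod l ^ Suc n) \<longlonglongrightarrow> 0"
      using LIMSEQ_Suc[OF LIMSEQ_power_zero[of "cmod l"]] 1 by (intro tendsto_mult_right_zero) simp
    then obtain n where "K * cmod l ^ Suc n < 1"
      using order_tendstoD(2)[of _ 0 sequentially 1] by (metis eventually_sequentially order.refl zero_less_one)
    moreover have "cmod (\<Sum>k\<le>n. l ^ k * (if k = 0 then 1 else 0)) \<le> K * cmod l ^ Suc n"
      by (rule bound) simp
    moreover have "(\<Sum>k\<le>n. l ^ k * (if k = 0 then 1 else 0)) = (\<Sum>k\<le>n. if k = 0 then 1 else 0)"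
      by (intro sum.cong) auto
    ultimately show False by simp
  next
    case 2
    have "l ^ k * cnj l ^ k = 1" for k
      using complex_norm_square[of l] 2 by (simp flip: power_mult_distrib)
    then have "(\<Sum>k\<le>n. l ^ k * cnj l ^ k) = of_nat (Suc n)" for n
      by simp
    then have "real (Suc n) \<le> K" for n
      using bound[of n "\<lambda>k. cnj l ^ k"] 2 by (simp only: norm_of_nat norm_power complex_mod_cnj) simp
    from this[of "nat \<lceil>K\<rceil>"] show False by linarith
  qed
qed

lemma cball_subset_op_spectrum_if_images_decrease:
  assumes H: "Hausdorff_space X" and L: "locally_compact_space X"
    and cont: "continuous_map X X \<tau>" and pr: "proper_map X X \<tau>"
    and dec: "\<And>n. (\<tau> ^^ Suc n) ` topspace X \<noteq> (\<tau> ^^ n) ` topspace X"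
  shows "cball 0 1 \<subseteq> op_spectrum X (comp_op X \<tau>)"
proof
  fix l :: complex assume l: "l \<in> cball 0 1"
  show "l \<in> op_spectrum X (comp_op X \<tau>)"
  proof (rule ccontr)
    assume "l \<notin> op_spectrum X (comp_op X \<tau>)"
    then obtain S where S: "bounded_op X S" "\<And>f. f \<in> C0 X \<Longrightarrow> S (\<lambda>x. comp_op X \<tau> f x - l * f x) = f"
      by (elim not_in_op_spectrumE) blast
    obtain K where K: "\<And>f x. f \<in> C0 X \<Longrightarrow> (\<And>y. cmod (f y) \<le> 1) \<Longrightarrow> cmod (S f x) \<le> K"
      using bounded_op_unit_ball_bound[OF S(1)] by blast
    have "\<exists>z\<in>topspace X. (\<tau> ^^ n) z \<notin> (\<tau> ^^ Suc n) ` topspace X" for n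
    proof -
      have "(\<tau> ^^ Suc n) ` topspace X \<subseteq> (\<tau> ^^ n) ` topspace X"
        by (rule funpow_image_antimono[OF cont]) simp
      with dec[of n] show ?thesis by blast
    qed
    then have "1 < cmod l"
      using left_resolvent_power_sum_bound[OF H L cont pr S K]
      by (intro one_lt_norm_if_power_sums_bounded[where K=K]) metis
    then show False using l by simp
  qed
qed

lemma cball_subset_op_spectrum_if_backward_chains:
  assumes H: "Hausdorff_space X" and L: "locally_compact_space X"
    and a: "\<And>k. a k \<in> topspace X" "\<And>k. \<tau> (a (Suc k)) = a k"
    and b: "\<And>k. b k \<in> topspace X" "\<And>k. \<tau> (b (Suc k)) = b k"
    and ab: "\<tau> (a 0) = \<tau> (b 0)" and b_inj: "inj b" and disj: "\<And>j k. a j \<noteq> b k"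
  shows "cball 0 1 \<subseteq> op_spectrum X (comp_op X \<tau>)"
proof
  fix l :: complex assume l: "l \<in> cball 0 1"
  show "l \<in> op_spectrum X (comp_op X \<tau>)"
  proof (rule ccontr)
    assume "l \<notin> op_spectrum X (comp_op X \<tau>)"
    then obtain S where S: "bounded_op X S" "\<And>g. g \<in> C0 X \<Longrightarrow> (\<lambda>x. comp_op X \<tau> (S g) x - l * S g x) = g"
      by (elim not_in_op_spectrumE) blast
    obtain K where K: "\<And>f x. f \<in> C0 X \<Longrightarrow> (\<And>y. cmod (f y) \<le> 1) \<Longrightarrow> cmod (S f x) \<le> K"
      using bounded_op_unit_ball_bound[OF S(1)] by blast
    have "1 < cmod l"
      using right_resolvent_power_sum_bound[OF H L S K a b ab inj_on_subset[OF b_inj] disj]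
      by (intro one_lt_norm_if_power_sums_bounded[where K="2 * K"]) blast
    then show False using l by simp
  qed
qed

section \<open>Periodic points and backward orbits\<close>

definition periodic_point :: "('a \<Rightarrow> 'a) \<Rightarrow> 'a \<Rightarrow> bool" where
  "periodic_point \<tau> x \<longleftrightarrow> (\<exists>q>0. (\<tau> ^^ q) x = x)"

lemma periodic_point_funpow:
  assumes "periodic_point \<tau> x"
  shows "periodic_point \<tau> ((\<tau> ^^ m) x)"
proof -
  obtain q where "q > 0" "(\<tau> ^^ q) x = x" using assms unfolding periodic_point_def by blast
  moreover have "(\<tau> ^^ q) ((\<tau> ^^ m) x) = (\<tau> ^^ m) ((\<tau> ^^ q) x)"
    by (metis add.commute comp_apply funpow_add)
  ultimately show ?thesis unfolding periodic_point_def by auto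
qed

lemma periodic_point_if_reaches_sibling:
  assumes "(\<tau> ^^ m) x = y" "m > 0" "\<tau> x = \<tau> y"
  shows "periodic_point \<tau> y"
proof -
  have "(\<tau> ^^ m) (\<tau> y) = \<tau> y"
    using assms by (metis funpow_swap1)
  then have "periodic_point \<tau> (\<tau> y)" using assms(2) unfolding periodic_point_def by blast
  then have "periodic_point \<tau> ((\<tau> ^^ (m - 1)) (\<tau> x))" using assms(3) by (simp add: periodic_point_funpow)
  moreover have "(\<tau> ^^ (m - 1)) (\<tau> x) = y"
    using assms(1,2) by (metis Suc_diff_1 comp_apply funpow_Suc_right)
  ultimately show ?thesis by simp
qed

lemma funpow_fixed_point: "f x = x \<Longrightarrow> (f ^^ n) x = x"
  by (induction n) simp_all

lemma periodic_points_with_same_image_eq: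
  assumes "\<tau> a = \<tau> b" "periodic_point \<tau> a" "periodic_point \<tau> b"
  shows "a = b"
proof -
  obtain q r where qr: "q > 0" "(\<tau> ^^ q) a = a" "r > 0" "(\<tau> ^^ r) b = b"
    using assms(2,3) unfolding periodic_point_def by blast
  have a: "(\<tau> ^^ (q * r)) a = a" and b: "(\<tau> ^^ (q * r)) b = b"
    using funpow_fixed_point[of "\<tau> ^^ q" a r] funpow_fixed_point[of "\<tau> ^^ r" b q] qr
    by (simp_all add: funpow_mult mult.commute)
  have "(\<tau> ^^ (q * r)) x = (\<tau> ^^ (q * r - 1)) (\<tau> x)" for x
    using qr by (metis Suc_diff_1 comp_apply funpow_Suc_right nat_0_less_mult_iff)
  then show ?thesis using a b assms(1) by metis
qed

lemma backward_chain_in_invariant_set: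
  assumes Y: "\<tau> ` Y = Y" and y: "y \<in> Y"
  obtains w where "w 0 = y" "\<And>k. w k \<in> Y" "\<And>k. \<tau> (w (Suc k)) = w k"
proof
  let ?w = "\<lambda>k. (inv_into Y \<tau> ^^ k) y"
  show "?w k \<in> Y" for k
    using y by (induction k) (auto intro: inv_into_into[of _ \<tau> Y, unfolded Y])
  then show "\<tau> (?w (Suc k)) = ?w k" for k
    using f_inv_into_f[of "?w k" \<tau> Y] Y by simp
qed simp

lemma periodic_backward_chain:
  assumes "(\<tau> ^^ q) a0 = a0" "q > 0"
  obtains a where "a 0 = a0" "\<And>k. \<tau> (a (Suc k)) = a k" "\<And>k. \<exists>m. a k = (\<tau> ^^ m) a0"
proof
  let ?a = "\<lambda>k. (\<tau> ^^ (k * (q - 1))) a0"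
  show "\<tau> (?a (Suc k)) = ?a k" for k
  proof -
    have "Suc (Suc k * (q - 1)) = k * (q - 1) + q" using assms(2) by (cases q) (auto simp: algebra_simps)
    then have "\<tau> (?a (Suc k)) = (\<tau> ^^ (k * (q - 1))) ((\<tau> ^^ q) a0)"
      by (metis comp_apply funpow.simps(2) funpow_add)
    then show ?thesis using assms(1) by simp
  qed
qed auto

lemma funpow_backward_chain:
  assumes "\<And>k. \<tau> (w (Suc k)) = w k"
  shows "(\<tau> ^^ k) (w k) = w 0"
  using assms by (induction k) (simp_all add: funpow_Suc_right del: funpow.simps)

lemma funpow_backward_chain_ge:
  assumes "\<And>k. \<tau> (w (Suc k)) = w k" "j \<le> k"
  shows "(\<tau> ^^ k) (w j) = (\<tau> ^^ (k - j)) (w 0)"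
proof -
  have "(\<tau> ^^ k) (w j) = (\<tau> ^^ (k - j)) ((\<tau> ^^ j) (w j))"
    using assms(2) by (metis comp_apply funpow_add le_add_diff_inverse2)
  then show ?thesis using funpow_backward_chain[where w=w, OF assms(1)] by simp
qed

lemma inj_backward_chain_if_not_periodic:
  assumes w: "\<And>k. \<tau> (w (Suc k)) = w k" and np: "\<not> periodic_point \<tau> (w 0)"
  shows "inj w"
proof (rule linorder_injI)
  fix i j :: nat assume ij: "i < j"
  show "w i \<noteq> w j"
  proof
    assume "w i = w j"
    then have "(\<tau> ^^ (j - i)) (w 0) = w 0"
      using funpow_backward_chain_ge[where w=w, OF w, of i j] funpow_backward_chain[where w=w, OF w, of j] ij
      by simp
    then show False using np ij unfolding periodic_point_def by (metis zero_less_diff)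
  qed
qed

text \<open>
  Of two distinct points with a common image at most one is periodic. Backward orbits from a
  non-periodic point never repeat, and cannot meet a backward orbit of the other point.
\<close>
lemma backward_chains_disjoint:
  assumes a: "\<And>k. \<tau> (a (Suc k)) = a k" and b: "\<And>k. \<tau> (b (Suc k)) = b k"
    and ab: "a 0 \<noteq> b 0" "\<tau> (a 0) = \<tau> (b 0)" and np: "\<not> periodic_point \<tau> (b 0)"
    and a_periodic: "periodic_point \<tau> (a 0) \<Longrightarrow> periodic_point \<tau> (a j)"
  shows "a j \<noteq> b k"
proof
  assume eq: "a j = b k"
  have "\<not> periodic_point \<tau> (a j)"
    using eq periodic_point_funpow[where \<tau>=\<tau> and x="b k" and m=k] funpow_backward_chain[where w=b, OF b, of k] np by auto
  then have np_a: "\<not> periodic_point \<tau> (a 0)" using a_periodic by blast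
  consider "j = k" | "j < k" | "k < j" by linarith
  then show False
  proof cases
    case 1
    then show False
      using eq ab(1) funpow_backward_chain[where w=a, OF a, of j] funpow_backward_chain[where w=b, OF b, of k] by simp
  next
    case 2
    have "(\<tau> ^^ (k - j)) (a 0) = b 0"
      using eq 2 funpow_backward_chain_ge[where w=a, OF a, of j k] funpow_backward_chain[where w=b, OF b, of k] by simp
    then show False
      using periodic_point_if_reaches_sibling[where \<tau>=\<tau> and m="k - j" and x="a 0" and y="b 0"] 2 ab(2) np by simp
  next
    case 3
    have "(\<tau> ^^ (j - k)) (b 0) = a 0"
      using eq 3 funpow_backward_chain_ge[where w=b, OF b, of k j] funpow_backward_chain[where w=a, OF a, of j] by simp
    then show False
      using periodic_point_if_reaches_sibling[where \<tau>=\<tau> and m="j - k" and x="b 0" and y="a 0"] 3 ab(2) np_a by simp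
  qed
qed

lemma backward_chains_if_not_inj_on:
  assumes cont: "continuous_map X X \<tau>" and Y: "Y \<subseteq> topspace X" "\<tau> ` Y = Y"
    and not_inj: "\<not> inj_on \<tau> Y"
  obtains a b where "\<And>k. a k \<in> topspace X" "\<And>k. \<tau> (a (Suc k)) = a k"
    "\<And>k. b k \<in> topspace X" "\<And>k. \<tau> (b (Suc k)) = b k"
    "\<tau> (a 0) = \<tau> (b 0)" "inj b" "\<And>j k. a j \<noteq> b k"
proof -
  obtain a' b' where ab': "a' \<in> Y" "b' \<in> Y" "a' \<noteq> b'" "\<tau> a' = \<tau> b'"
    using not_inj unfolding inj_on_def by blast
  obtain a0 b0 where ab0: "a0 \<in> Y" "b0 \<in> Y" "a0 \<noteq> b0" "\<tau> a0 = \<tau> b0" "\<not> periodic_point \<tau> b0"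
  proof (cases "periodic_point \<tau> b'")
    case True
    then have "\<not> periodic_point \<tau> a'" using periodic_points_with_same_image_eq[OF ab'(4) _ True] ab'(3) by auto
    then show thesis using that[of b' a'] ab' by simp
  next
    case False
    then show thesis using that[of a' b'] ab' by simp
  qed
  obtain b where b: "b 0 = b0" "\<And>k. b k \<in> Y" "\<And>k. \<tau> (b (Suc k)) = b k"
    using backward_chain_in_invariant_set[OF Y(2) ab0(2)] by metis
  obtain a where a: "a 0 = a0" "\<And>k. a k \<in> topspace X" "\<And>k. \<tau> (a (Suc k)) = a k"
    and a_periodic: "\<And>j. periodic_point \<tau> a0 \<Longrightarrow> periodic_point \<tau> (a j)"
  proof (cases "periodic_point \<tau> a0")
    case True
    then obtain q where "(\<tau> ^^ q) a0 = a0" "q > 0" unfolding periodic_point_def by blast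
    from periodic_backward_chain[OF this] obtain a
      where a: "a 0 = a0" "\<And>k. \<tau> (a (Suc k)) = a k" "\<And>k. \<exists>m. a k = (\<tau> ^^ m) a0" by blast
    show thesis
    proof (rule that[OF a(1) _ a(2)])
      fix k
      obtain m where "a k = (\<tau> ^^ m) a0" using a(3) by blast
      then show "a k \<in> topspace X" "periodic_point \<tau> (a k)"
        using funpow_in_topspace[OF cont] ab0(1) Y(1) periodic_point_funpow[OF True] by auto
    qed
  next
    case False
    obtain a where "a 0 = a0" "\<And>k. a k \<in> Y" "\<And>k. \<tau> (a (Suc k)) = a k"
      using backward_chain_in_invariant_set[OF Y(2) ab0(1)] by metis
    then show thesis using that[of a] False Y(1) by blast
  qed
  show thesis
  proof (rule that)
    show "a k \<in> topspace X" "\<tau> (a (Suc k)) = a k" "\<tau> (b (Suc k)) = b k" for k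
      using a(2,3) b(3) by simp_all
    show "b k \<in> topspace X" for k using b(2) Y(1) by blast
    show "\<tau> (a 0) = \<tau> (b 0)" using a(1) b(1) ab0(4) by simp
    show "inj b" using inj_backward_chain_if_not_periodic[where w=b, OF b(3)] ab0(5) b(1) by simp
    show "a j \<noteq> b k" for j k
      using backward_chains_disjoint[where a=a and b=b, OF a(3) b(3)] a(1) b(1) ab0(3-5) a_periodic by blast
  qed
qed

lemma op_spectrum_comp_op_subset_cball:
  assumes "continuous_map X X \<tau>" "proper_map X X \<tau>"
  shows "op_spectrum X (comp_op X \<tau>) \<subseteq> cball 0 1"
  using not_in_op_spectrum_if_norm_gt_one[OF assms] by (meson mem_cball_0 not_le subsetI)

lemma zero_in_op_spectrum_comp_op_if_not_surjective:
  assumes H: "Hausdorff_space X" and L: "locally_compact_space X"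
    and cont: "continuous_map X X \<tau>" and pr: "proper_map X X \<tau>"
    and not_surj: "\<tau> ` topspace X \<noteq> topspace X"
  shows "0 \<in> op_spectrum X (comp_op X \<tau>)"
proof (rule ccontr)
  assume "0 \<notin> op_spectrum X (comp_op X \<tau>)"
  then obtain S where S: "bounded_op X S" "\<And>f. f \<in> C0 X \<Longrightarrow> S (\<lambda>x. comp_op X \<tau> f x - 0 * f x) = f"
    by (elim not_in_op_spectrumE) blast
  obtain K where K: "\<And>f x. f \<in> C0 X \<Longrightarrow> (\<And>y. cmod (f y) \<le> 1) \<Longrightarrow> cmod (S f x) \<le> K"
    using bounded_op_unit_ball_bound[OF S(1)] by blast
  obtain z where z: "z \<in> topspace X" "(\<tau> ^^ 0) z \<notin> (\<tau> ^^ Suc 0) ` topspace X"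
    using not_surj cont by (auto simp: continuous_map_def)
  have "cmod (\<Sum>k\<le>0. 0 ^ k * 1) \<le> K * cmod (0::complex) ^ Suc 0"
    by (rule left_resolvent_power_sum_bound[OF H L cont pr S K z]) simp_all
  then show False by simp
qed

lemma op_spectrum_comp_op_eq_cball_if_images_decrease:
  assumes "Hausdorff_space X" "locally_compact_space X" "continuous_map X X \<tau>" "proper_map X X \<tau>"
    and "\<And>n. (\<tau> ^^ Suc n) ` topspace X \<noteq> (\<tau> ^^ n) ` topspace X"
  shows "op_spectrum X (comp_op X \<tau>) = cball 0 1"
  using op_spectrum_comp_op_subset_cball[OF assms(3,4)]
    cball_subset_op_spectrum_if_images_decrease[OF assms] by blast

lemma op_spectrum_comp_op_if_image_stabilizes:
  assumes H: "Hausdorff_space X" and L: "locally_compact_space X"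
    and cont: "continuous_map X X \<tau>" and pr: "proper_map X X \<tau>"
    and stable: "(\<tau> ^^ Suc n) ` topspace X = (\<tau> ^^ n) ` topspace X"
  shows "op_spectrum X (comp_op X \<tau>) = cball 0 1 \<or> op_spectrum X (comp_op X \<tau>) \<subseteq> sphere 0 1 \<union> {0}"
proof (cases "inj_on \<tau> ((\<tau> ^^ n) ` topspace X)")
  case True
  then interpret bijective_on_eventual_image X \<tau> n
    using cont pr stable by unfold_locales (simp_all add: image_comp)
  have "op_spectrum X (comp_op X \<tau>) \<subseteq> sphere 0 1 \<union> {0}"
    using op_spectrum_comp_op_subset_cball[OF cont pr] not_in_op_spectrum_inside_disc
    by (force simp: less_le)
  then show ?thesis ..
next
  case False
  have "(\<tau> ^^ n) ` topspace X \<subseteq> topspace X" using funpow_in_topspace[OF cont] by blast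
  moreover have "\<tau> ` (\<tau> ^^ n) ` topspace X = (\<tau> ^^ n) ` topspace X"
    using stable by (simp add: image_comp)
  ultimately obtain a b where "\<And>k. a k \<in> topspace X" "\<And>k. \<tau> (a (Suc k)) = a k"
    "\<And>k. b k \<in> topspace X" "\<And>k. \<tau> (b (Suc k)) = b k"
    "\<tau> (a 0) = \<tau> (b 0)" "inj b" "\<And>j k. a j \<noteq> b k"
    using backward_chains_if_not_inj_on[OF cont _ _ False] by metis
  from cball_subset_op_spectrum_if_backward_chains[OF H L this]
  show ?thesis using op_spectrum_comp_op_subset_cball[OF cont pr] by blast
qed

theorem theorem4p3:
  fixes X :: "'a topology" and \<tau> :: "'a \<Rightarrow> 'a"
  assumes "Hausdorff_space X" and "locally_compact_space X"
    and "continuous_map X X \<tau>" and "proper_map X X \<tau>"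
  shows "(op_spectrum X (comp_op X \<tau>) = cball 0 1 \<or> {z. 0 < cmod z \<and> cmod z < 1} \<subseteq> - op_spectrum X (comp_op X \<tau>))
    \<and> (\<tau> ` topspace X \<noteq> topspace X \<longrightarrow> 0 \<in> op_spectrum X (comp_op X \<tau>))
    \<and> ((\<forall>n. (\<tau> ^^ Suc n) ` topspace X \<noteq> (\<tau> ^^ n) ` topspace X) \<longrightarrow> op_spectrum X (comp_op X \<tau>) = cball 0 1)
    \<and> ((\<exists>n0. (\<tau> ^^ Suc n0) ` topspace X = (\<tau> ^^ n0) ` topspace X)
        \<longrightarrow> op_spectrum X (comp_op X \<tau>) = cball 0 1 \<or> op_spectrum X (comp_op X \<tau>) \<subseteq> sphere 0 1 \<union> {0})"
proof -
  let ?\<sigma> = "op_spectrum X (comp_op X \<tau>)"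
  have decrease: "(\<forall>n. (\<tau> ^^ Suc n) ` topspace X \<noteq> (\<tau> ^^ n) ` topspace X) \<longrightarrow> ?\<sigma> = cball 0 1"
    using op_spectrum_comp_op_eq_cball_if_images_decrease[OF assms] by blast
  have stabilize: "(\<exists>n0. (\<tau> ^^ Suc n0) ` topspace X = (\<tau> ^^ n0) ` topspace X)
      \<longrightarrow> ?\<sigma> = cball 0 1 \<or> ?\<sigma> \<subseteq> sphere 0 1 \<union> {0}"
    using op_spectrum_comp_op_if_image_stabilizes[OF assms] by blast
  moreover have "?\<sigma> \<subseteq> sphere 0 1 \<union> {0} \<Longrightarrow> {z. 0 < cmod z \<and> cmod z < 1} \<subseteq> - ?\<sigma>"
    by auto
  ultimately have "?\<sigma> = cball 0 1 \<or> {z. 0 < cmod z \<and> cmod z < 1} \<subseteq> - ?\<sigma>"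
    using decrease by blast
  then show ?thesis
    using decrease stabilize zero_in_op_spectrum_comp_op_if_not_surjective[OF assms] by blast
qed

end
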